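(* Let $n\ge 0$ and let $R$ be a local algebra of $\mathbb C$-dimension $n+2$. If $R$ is not isomorphic to $B_n=\mathbb C[S_1,\ldots,S_{n+1}]/(S_iS_j\mid i,j=1,\ldots,n+1)$, then $R$ is an $n$-factor.
   Context: A local algebra means a finite-dimensional commutative associative unital $\mathbb C$-algebra with a unique maximal ideal $\mathfrak m_R$ and $R/\mathfrak m_R\cong\mathbb C$. An $n$-factor is an algebra of the form $\mathbb C[S_1,\ldots,S_n]/I$ (for some ideal $I$) in which the images of $S_1,\ldots,S_n$ are linearly independent over $\mathbb C$; equivalently, an algebra generated by $n$ linearly independent elements. *)

theory Defs
  imports Main Complex_Main
begin

text \<open>A commutative associative unital complex algebra: the ring structure comes from
  the type class comm_ring_1, the complex scalar multiplication is given by sc.\<close>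
definition cx_algebra :: "(complex \<Rightarrow> 'a::comm_ring_1 \<Rightarrow> 'a) \<Rightarrow> bool" where
  "cx_algebra sc \<longleftrightarrow> vector_space sc \<and> (\<forall>c x y. sc c (x * y) = sc c x * y)"

definition is_ideal :: "'a::comm_ring_1 set \<Rightarrow> bool" where
  "is_ideal I \<longleftrightarrow> 0 \<in> I \<and> (\<forall>x\<in>I. \<forall>y\<in>I. x + y \<in> I) \<and> (\<forall>r. \<forall>x\<in>I. r * x \<in> I)"

definition maximal_ideal :: "'a::comm_ring_1 set \<Rightarrow> bool" where
  "maximal_ideal M \<longleftrightarrow> is_ideal M \<and> M \<noteq> UNIV \<and>
     (\<forall>J. is_ideal J \<and> M \<subseteq> J \<longrightarrow> J = M \<or> J = UNIV)"

text \<open>The natural map from the scalars to R/m (c to the class of c*1) is a bijection,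
  i.e. R/m is isomorphic to C.\<close>
definition residue_field_C :: "(complex \<Rightarrow> 'a::comm_ring_1 \<Rightarrow> 'a) \<Rightarrow> 'a set \<Rightarrow> bool" where
  "residue_field_C sc M \<longleftrightarrow> (\<forall>x. \<exists>!c. x - sc c 1 \<in> M)"

definition local_algebra :: "(complex \<Rightarrow> 'a::comm_ring_1 \<Rightarrow> 'a) \<Rightarrow> bool" where
  "local_algebra sc \<longleftrightarrow> cx_algebra sc \<and> (\<exists>B. finite B \<and> module.span sc B = UNIV) \<and>
     (\<exists>!M :: 'a set. maximal_ideal M) \<and> (\<forall>M. maximal_ideal M \<longrightarrow> residue_field_C sc M)"

definition subalg_gen :: "(complex \<Rightarrow> 'a::comm_ring_1 \<Rightarrow> 'a) \<Rightarrow> 'a set \<Rightarrow> 'a set" where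
  "subalg_gen sc S = \<Inter>{A. S \<subseteq> A \<and> 1 \<in> A \<and> (\<forall>x\<in>A. \<forall>y\<in>A. x + y \<in> A \<and> x * y \<in> A) \<and>
                          (\<forall>c. \<forall>x\<in>A. sc c x \<in> A)}"

text \<open>R is an n-factor: generated (as an algebra) by n linearly independent elements,
  i.e. R is a quotient of C[S_1..S_n] in which the images of the S_i are independent.\<close>
definition n_factor :: "(complex \<Rightarrow> 'a::comm_ring_1 \<Rightarrow> 'a) \<Rightarrow> nat \<Rightarrow> bool" where
  "n_factor sc n \<longleftrightarrow> (\<exists>s :: nat \<Rightarrow> 'a. inj_on s {..<n} \<and> \<not> module.dependent sc (s ` {..<n}) \<and>
      subalg_gen sc (s ` {..<n}) = UNIV)"

text \<open>Concrete model of B_n = C[S_1..S_{n+1}]/(S_i S_j): it has basis 1, S_1, ..., S_{n+1};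
  an element a_0 + sum a_i S_i is the coefficient function a (index 0 = constant term),
  with a i = 0 for i > n+1.\<close>
definition Bn_carrier :: "nat \<Rightarrow> (nat \<Rightarrow> complex) set" where
  "Bn_carrier n = {a. \<forall>i>n+1. a i = 0}"

definition Bn_add :: "(nat \<Rightarrow> complex) \<Rightarrow> (nat \<Rightarrow> complex) \<Rightarrow> (nat \<Rightarrow> complex)" where
  "Bn_add a b = (\<lambda>i. a i + b i)"

definition Bn_scale :: "complex \<Rightarrow> (nat \<Rightarrow> complex) \<Rightarrow> (nat \<Rightarrow> complex)" where
  "Bn_scale c a = (\<lambda>i. c * a i)"

definition Bn_mult :: "nat \<Rightarrow> (nat \<Rightarrow> complex) \<Rightarrow> (nat \<Rightarrow> complex) \<Rightarrow> (nat \<Rightarrow> complex)" where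
  "Bn_mult n a b = (\<lambda>i. if i = 0 then a 0 * b 0
                        else if i \<le> n + 1 then a 0 * b i + b 0 * a i else 0)"

definition Bn_one :: "nat \<Rightarrow> complex" where
  "Bn_one = (\<lambda>i. if i = 0 then 1 else 0)"

definition iso_Bn :: "(complex \<Rightarrow> 'a::comm_ring_1 \<Rightarrow> 'a) \<Rightarrow> nat \<Rightarrow> bool" where
  "iso_Bn sc n \<longleftrightarrow> (\<exists>f. bij_betw f UNIV (Bn_carrier n) \<and>
      (\<forall>x y. f (x + y) = Bn_add (f x) (f y)) \<and>
      (\<forall>x y. f (x * y) = Bn_mult n (f x) (f y)) \<and>
      (\<forall>c x. f (sc c x) = Bn_scale c (f x)) \<and>
      f 1 = Bn_one)"

end

theory Submission
  imports Defs
begin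

text \<open>
  Let R be a local algebra with maximal ideal M, of dimension n + 2.  Since R/M is C, R is
  spanned by 1 together with M, so dim M = n + 1.  Two cases:

  (A) every element of M squares to zero.  Polarisation (using that 2 is invertible) shows
      that all products of elements of M vanish; choosing a basis b_1, ..., b_(n+1) of M, the
      map a |-> a_0 * 1 + sum a_i b_i is then an algebra isomorphism from B_n onto R.
  (B) some x in M has x * x \<noteq> 0.  Then x * x is not a multiple of x (otherwise a
      rescaling of x would be a nonzero idempotent in M, impossible since 1 - e is a unit).
      Extend {x, x * x} to a basis B of M and drop x * x: the remaining n elements are
      independent and generate R as an algebra, since they generate x * x and hence B and 1.
\<close>

lemma Bn_add_carrier: "a \<in> Bn_carrier n \<Longrightarrow> a' \<in> Bn_carrier n \<Longrightarrow> Bn_add a a' \<in> Bn_carrier n"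
  unfolding Bn_carrier_def Bn_add_def by simp

lemma Bn_scale_carrier: "a \<in> Bn_carrier n \<Longrightarrow> Bn_scale c a \<in> Bn_carrier n"
  unfolding Bn_carrier_def Bn_scale_def by simp

lemma Bn_mult_carrier: "Bn_mult n a a' \<in> Bn_carrier n"
  unfolding Bn_carrier_def Bn_mult_def by simp

lemma Bn_one_carrier: "Bn_one \<in> Bn_carrier n"
  unfolding Bn_carrier_def Bn_one_def by simp

lemma iso_Bn_if_bij_hom:
  fixes g :: "(nat \<Rightarrow> complex) \<Rightarrow> 'a::comm_ring_1" and sc :: "complex \<Rightarrow> 'a \<Rightarrow> 'a"
  assumes bij: "bij_betw g (Bn_carrier n) UNIV"
    and add: "\<And>a a'. g (Bn_add a a') = g a + g a'"
    and mult: "\<And>a a'. g (Bn_mult n a a') = g a * g a'"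
    and scale: "\<And>c a. g (Bn_scale c a) = sc c (g a)"
    and one: "g Bn_one = 1"
  shows "iso_Bn sc n"
proof -
  define f where "f = inv_into (Bn_carrier n) g"
  have f_bij: "bij_betw f UNIV (Bn_carrier n)" unfolding f_def by (rule bij_betw_inv_into[OF bij])
  then have f_carrier: "f x \<in> Bn_carrier n" for x unfolding bij_betw_def by blast
  have g_f: "g (f x) = x" for x
    unfolding f_def using bij by (simp add: bij_betw_def f_inv_into_f)
  have f_g: "f (g a) = a" if "a \<in> Bn_carrier n" for a
    unfolding f_def using bij that by (simp add: bij_betw_def inv_into_f_f)
  have "f (x + y) = Bn_add (f x) (f y)" for x y
    using f_g[OF Bn_add_carrier[OF f_carrier f_carrier], of x y] add g_f by simp
  moreover have "f (x * y) = Bn_mult n (f x) (f y)" for x y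
    using f_g[OF Bn_mult_carrier, of "f x" "f y"] mult g_f by simp
  moreover have "f (sc c x) = Bn_scale c (f x)" for c x
    using f_g[OF Bn_scale_carrier[OF f_carrier], of c x] scale g_f by simp
  moreover have "f 1 = Bn_one" using f_g[OF Bn_one_carrier] one by simp
  ultimately show ?thesis unfolding iso_Bn_def using f_bij by blast
qed

locale local_cx_algebra = finite_dimensional_vector_space sc Basis
  for sc :: "complex \<Rightarrow> 'a::comm_ring_1 \<Rightarrow> 'a" and Basis +
  fixes M :: "'a set"
  assumes scale_mult: "\<And>c x y. sc c (x * y) = sc c x * y"
    and maximal_M: "maximal_ideal M"
    and unique_M: "\<And>J. maximal_ideal J \<Longrightarrow> J = M"
    and residue_M: "residue_field_C sc M"
begin

lemma scale_eq_mult_one: "sc c x = sc c 1 * x"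
  using scale_mult[of c 1 x] by simp

lemma scale_mult_left: "sc c x * y = sc c (x * y)"
  using scale_mult by simp

lemma scale_mult_right: "x * sc c y = sc c (x * y)"
  using scale_mult[of c y x] by (simp add: mult.commute)

lemma ideal_subspace: "is_ideal I \<Longrightarrow> subspace I"
  unfolding subspace_def is_ideal_def by (metis scale_eq_mult_one)

lemma ideal_with_one: "is_ideal I \<Longrightarrow> 1 \<in> I \<Longrightarrow> I = UNIV"
  unfolding is_ideal_def by (metis UNIV_eq_I mult.right_neutral)

lemma M_ideal: "is_ideal M"
  using maximal_M maximal_ideal_def by blast

lemma M_subspace: "subspace M"
  using ideal_subspace M_ideal by blast

lemma one_notin_M: "1 \<notin> M"
  using ideal_with_one M_ideal maximal_M maximal_ideal_def by blast

lemma M_add: "x \<in> M \<Longrightarrow> y \<in> M \<Longrightarrow> x + y \<in> M"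
  using M_ideal unfolding is_ideal_def by blast

lemma M_mult: "x \<in> M \<Longrightarrow> r * x \<in> M"
  using M_ideal unfolding is_ideal_def by blast

text \<open>Every proper ideal lies in M: a proper ideal of maximal dimension above it is a
  maximal ideal, hence equals M.  Finite dimension replaces Zorn's lemma here.\<close>

lemma proper_ideal_subset_M:
  assumes I: "is_ideal I" "1 \<notin> I"
  shows "I \<subseteq> M"
proof -
  let ?P = "\<lambda>d. \<exists>J. is_ideal J \<and> I \<subseteq> J \<and> 1 \<notin> J \<and> dim J = d"
  have "\<exists>d. ?P d \<and> (\<forall>y. ?P y \<longrightarrow> y \<le> d)"
    by (rule Nat.ex_has_greatest_nat[of ?P "dim I" dimension]) (use I dim_subset_UNIV in auto)
  then obtain J where J: "is_ideal J" "I \<subseteq> J" "1 \<notin> J"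
    and J_greatest: "\<And>K. is_ideal K \<Longrightarrow> I \<subseteq> K \<Longrightarrow> 1 \<notin> K \<Longrightarrow> dim K \<le> dim J"
    by blast
  have "maximal_ideal J"
    unfolding maximal_ideal_def
  proof (intro conjI allI impI)
    show "is_ideal J" "J \<noteq> UNIV" using J by auto
    fix K assume K: "is_ideal K \<and> J \<subseteq> K"
    show "K = J \<or> K = UNIV"
    proof (cases "1 \<in> K")
      case True
      then show ?thesis using ideal_with_one K by blast
    next
      case False
      then have "dim K \<le> dim J" using J_greatest K J by blast
      then have "J = K" using subspace_dim_equal[of J K] ideal_subspace K J by blast
      then show ?thesis by simp
    qed
  qed
  then show ?thesis using unique_M J by blast
qed

text \<open>Elements outside M are units: otherwise the principal ideal they generate is proper.\<close>

lemma unit_outside_M: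
  assumes "y \<notin> M"
  shows "\<exists>u. y * u = 1"
proof (rule ccontr)
  assume no_inverse: "\<not> ?thesis"
  have "is_ideal (range ((*) y))"
    unfolding is_ideal_def
  proof (intro conjI ballI allI)
    show "0 \<in> range ((*) y)" by (metis rangeI mult_zero_right)
    fix a b assume "a \<in> range ((*) y)" "b \<in> range ((*) y)"
    then show "a + b \<in> range ((*) y)" by (auto simp: distrib_left[symmetric])
  next
    fix r a assume "a \<in> range ((*) y)"
    then show "r * a \<in> range ((*) y)" by (metis image_iff mult.left_commute rangeI)
  qed
  moreover have "1 \<notin> range ((*) y)" using no_inverse by auto
  ultimately have "range ((*) y) \<subseteq> M" using proper_ideal_subset_M by blast
  then show False using assms by (metis rangeI mult.right_neutral subsetD)
qed

text \<open>M contains no nonzero idempotent e, since 1 - e is a unit and e (1 - e) = 0.\<close>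

lemma idempotent_in_M:
  assumes "e \<in> M" and "e * e = e"
  shows "e = 0"
proof -
  have "1 - e \<notin> M"
  proof
    assume "1 - e \<in> M"
    then have "(1 - e) + e \<in> M" using M_add assms(1) by blast
    then show False using one_notin_M by simp
  qed
  then obtain u where u: "(1 - e) * u = 1" using unit_outside_M by blast
  have "e = e * ((1 - e) * u)" using u by simp
  also have "\<dots> = (e - e * e) * u" by (simp add: algebra_simps)
  finally show "e = 0" using assms(2) by simp
qed

lemma square_proportional_in_M:
  assumes x: "x \<in> M" and square: "x * x = sc c x"
  shows "x * x = 0"
proof (cases "c = 0")
  case True
  then show ?thesis using square by simp
next
  case False
  define e where "e = sc (inverse c) x"
  have "e \<in> M" using x M_subspace unfolding e_def subspace_def by blast
  moreover have "e * e = e"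
    unfolding e_def scale_mult_left scale_mult_right square using False by simp
  ultimately have "e = 0" by (rule idempotent_in_M)
  then show ?thesis unfolding e_def using False by simp
qed

text \<open>Since R/M = C, the algebra is spanned by 1 together with any spanning set of M.\<close>

lemma span_insert_one:
  assumes "M \<subseteq> span B"
  shows "span (insert 1 B) = UNIV"
proof -
  have "x \<in> span (insert 1 B)" for x
  proof -
    obtain c where c: "x - sc c 1 \<in> M"
      using residue_M unfolding residue_field_C_def by blast
    then have "x - sc c 1 \<in> span (insert 1 B)" using assms span_mono[of B "insert 1 B"] by blast
    moreover have "sc c 1 \<in> span (insert 1 B)" by (simp add: span_base span_scale)
    ultimately have "(x - sc c 1) + sc c 1 \<in> span (insert 1 B)" using span_add by blast
    then show ?thesis by simp
  qed
  then show ?thesis by blast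
qed

lemma dim_UNIV_eq_dim_M: "dim (UNIV :: 'a set) = dim M + 1"
proof -
  obtain B where B: "B \<subseteq> M" "independent B" "M \<subseteq> span B"
    using basis_exists[of M] by metis
  have "span B \<subseteq> M" using span_minimal[OF B(1) M_subspace] .
  then have "1 \<notin> span B" using one_notin_M by blast
  then have "independent (insert 1 B)" using independent_insertI B(2) by metis
  then have "dim (UNIV :: 'a set) = card (insert 1 B)"
    using dim_eq_card[of "insert 1 B" UNIV] span_insert_one[OF B(3)] by simp
  moreover have "1 \<notin> B" using B(1) one_notin_M by blast
  moreover have "finite B" using B(2) by (rule finiteI_independent)
  moreover have "card B = dim M" using basis_card_eq_dim[OF B(1) B(3) B(2)] .
  ultimately show ?thesis by simp
qed

lemma subalg_gen_subspace: "subspace (subalg_gen sc S)"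
proof (rule subspaceI)
  show "0 \<in> subalg_gen sc S"
    unfolding subalg_gen_def by (metis (mono_tags, lifting) InterI mem_Collect_eq scale_zero_left)
  show "x + y \<in> subalg_gen sc S" if "x \<in> subalg_gen sc S" "y \<in> subalg_gen sc S" for x y
    using that unfolding subalg_gen_def by blast
  show "sc c x \<in> subalg_gen sc S" if "x \<in> subalg_gen sc S" for c x
    using that unfolding subalg_gen_def by blast
qed

lemma subalg_gen_UNIV:
  assumes "B \<subseteq> subalg_gen sc S" and "M \<subseteq> span B"
  shows "subalg_gen sc S = UNIV"
proof -
  have "1 \<in> subalg_gen sc S" unfolding subalg_gen_def by blast
  then have "span (insert 1 B) \<subseteq> subalg_gen sc S"
    using assms(1) span_minimal subalg_gen_subspace by (metis insert_subset)
  then show ?thesis using span_insert_one[OF assms(2)] by blast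
qed

lemma n_factor_if_square_nonzero:
  assumes dim: "dim (UNIV :: 'a set) = n + 2" and x: "x \<in> M" "x * x \<noteq> 0"
  shows "n_factor sc n"
proof -
  have x_nonzero: "x \<noteq> 0" using x(2) by auto
  have "x * x \<notin> span {x}"
  proof
    assume "x * x \<in> span {x}"
    then obtain c where "x * x = sc c x" unfolding span_singleton by blast
    then show False using square_proportional_in_M[OF x(1)] x(2) by blast
  qed
  moreover have "independent {x}"
    using independent_insertI[of x "{}"] x_nonzero by simp
  ultimately have indep: "independent {x * x, x}"
    by (rule independent_insertI)
  have "{x * x, x} \<subseteq> M" using x(1) M_mult by simp
  then obtain B where B: "{x * x, x} \<subseteq> B" "B \<subseteq> M" "independent B" "M \<subseteq> span B"
    using maximal_independent_subset_extend[OF _ indep] by metis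
  have "card B = n + 1"
    using basis_card_eq_dim[OF B(2) B(4) B(3)] dim dim_UNIV_eq_dim_M by simp
  define S where "S = B - {x * x}"
  have finite_S: "finite S" unfolding S_def using B(3) finiteI_independent by blast
  have card_S: "card S = n"
    unfolding S_def using \<open>card B = n + 1\<close> B(1) finite_S by (simp add: card_Diff_singleton)
  have indep_S: "independent S" unfolding S_def using B(3) independent_mono by blast
  have "x \<in> S"
    using B(1) \<open>x * x \<notin> span {x}\<close> span_base[of x "{x}"] unfolding S_def by auto
  have S_sub: "S \<subseteq> subalg_gen sc S" unfolding subalg_gen_def by blast
  moreover have "x * x \<in> subalg_gen sc S"
    using S_sub \<open>x \<in> S\<close> unfolding subalg_gen_def by blast
  ultimately have "B \<subseteq> subalg_gen sc S" unfolding S_def by blast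
  then have generates: "subalg_gen sc S = UNIV" using subalg_gen_UNIV B(4) by blast
  obtain s where "bij_betw s {..<n} S"
    using ex_bij_betw_nat_finite[OF finite_S] card_S by (metis lessThan_atLeast0)
  then show ?thesis
    unfolding n_factor_def bij_betw_def using indep_S generates by metis
qed

lemma products_vanish:
  assumes squares: "\<And>z. z \<in> M \<Longrightarrow> z * z = 0" and "x \<in> M" "y \<in> M"
  shows "x * y = 0"
proof -
  have "(x + y) * (x + y) = 0" using squares M_add assms(2,3) by blast
  then have "x * y + x * y = 0" using squares assms(2,3) by (simp add: algebra_simps)
  then have "sc 2 (x * y) = 0"
    by (metis one_add_one scale_left_distrib scale_one)
  then show ?thesis by simp
qed

definition M_part :: "nat \<Rightarrow> (nat \<Rightarrow> 'a) \<Rightarrow> (nat \<Rightarrow> complex) \<Rightarrow> 'a" where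
  "M_part n b a = (\<Sum>i\<in>{1..n+1}. sc (a i) (b i))"

definition Bn_embed :: "nat \<Rightarrow> (nat \<Rightarrow> 'a) \<Rightarrow> (nat \<Rightarrow> complex) \<Rightarrow> 'a" where
  "Bn_embed n b a = sc (a 0) 1 + M_part n b a"

context
  fixes n :: nat and b :: "nat \<Rightarrow> 'a" and BM :: "'a set"
  assumes b_bij: "bij_betw b {1..n+1} BM"
    and BM_basis: "BM \<subseteq> M" "independent BM" "M \<subseteq> span BM"
begin

lemma M_part_in_M: "M_part n b a \<in> M"
proof -
  have "M_part n b a \<in> span BM" unfolding M_part_def
    by (intro span_sum span_scale span_base) (use b_bij in \<open>auto simp: bij_betw_def\<close>)
  then show ?thesis using span_minimal[OF BM_basis(1) M_subspace] by blast
qed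

lemma Bn_embed_add: "Bn_embed n b (Bn_add a a') = Bn_embed n b a + Bn_embed n b a'"
  unfolding Bn_embed_def M_part_def Bn_add_def
  by (simp add: scale_left_distrib sum.distrib algebra_simps)

lemma Bn_embed_scale: "Bn_embed n b (Bn_scale c a) = sc c (Bn_embed n b a)"
  unfolding Bn_embed_def M_part_def Bn_scale_def by (simp add: scale_sum_right scale_right_distrib)

lemma Bn_embed_one: "Bn_embed n b Bn_one = 1"
proof -
  have "M_part n b Bn_one = 0" unfolding M_part_def Bn_one_def by (rule sum.neutral) auto
  then show ?thesis unfolding Bn_embed_def by (simp add: Bn_one_def)
qed

lemma Bn_embed_mult:
  assumes M_products: "\<And>x y. x \<in> M \<Longrightarrow> y \<in> M \<Longrightarrow> x * y = 0"
  shows "Bn_embed n b (Bn_mult n a a') = Bn_embed n b a * Bn_embed n b a'"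
proof -
  have M_part_mult: "M_part n b (Bn_mult n a a') = sc (a 0) (M_part n b a') + sc (a' 0) (M_part n b a)"
  proof -
    have "M_part n b (Bn_mult n a a') = (\<Sum>i\<in>{1..n+1}. sc (a 0 * a' i + a' 0 * a i) (b i))"
      unfolding M_part_def Bn_mult_def by (rule sum.cong) auto
    also have "\<dots> = sc (a 0) (M_part n b a') + sc (a' 0) (M_part n b a)"
      unfolding M_part_def by (simp only: scale_left_distrib sum.distrib scale_sum_right scale_scale)
    finally show ?thesis .
  qed
  have "M_part n b a * M_part n b a' = 0" using M_products M_part_in_M by blast
  then have "Bn_embed n b a * Bn_embed n b a'
      = sc (a 0 * a' 0) 1 + sc (a 0) (M_part n b a') + sc (a' 0) (M_part n b a)"
    unfolding Bn_embed_def by (simp add: algebra_simps scale_mult_left scale_mult_right)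
  also have "\<dots> = Bn_embed n b (Bn_mult n a a')"
    unfolding Bn_embed_def M_part_mult by (simp add: Bn_mult_def algebra_simps)
  finally show ?thesis by simp
qed

text \<open>Only the zero coefficient function of B_n is sent to 0: the constant term vanishes
  because 1 is not in M, the others by independence of the basis of M.\<close>

lemma Bn_embed_eq_0:
  assumes a: "a \<in> Bn_carrier n" "Bn_embed n b a = 0"
  shows "a = (\<lambda>_. 0)"
proof -
  have a0: "a 0 = 0"
  proof (rule ccontr)
    assume nonzero: "a 0 \<noteq> 0"
    have "sc (a 0) 1 = - M_part n b a" using a(2) unfolding Bn_embed_def
      by (simp add: eq_neg_iff_add_eq_0)
    then have "sc (a 0) 1 \<in> M" using M_part_in_M M_subspace by (metis scale_minus_left scale_one subspace_def)
    then have "sc (inverse (a 0)) (sc (a 0) 1) \<in> M" using M_subspace unfolding subspace_def by blast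
    then show False using nonzero one_notin_M by simp
  qed
  then have M_part_0: "M_part n b a = 0" using a(2) unfolding Bn_embed_def by simp
  define u where "u v = a (inv_into {1..n+1} b v)" for v
  have "(\<Sum>v\<in>BM. sc (u v) v) = (\<Sum>i\<in>{1..n+1}. sc (u (b i)) (b i))"
    by (rule sum.reindex_bij_betw[OF b_bij, symmetric])
  also have "\<dots> = M_part n b a" unfolding M_part_def u_def
    by (rule sum.cong) (use b_bij in \<open>auto simp: bij_betw_def\<close>)
  finally have combination_0: "(\<Sum>v\<in>BM. sc (u v) v) = 0" using M_part_0 by simp
  have "finite BM" using BM_basis(2) by (rule finiteI_independent)
  have "a i = 0" for i
  proof (cases "i \<in> {1..n+1}")
    case True
    then have "b i \<in> BM" using b_bij unfolding bij_betw_def by blast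
    then have "u (b i) = 0"
      by (rule independentD[OF BM_basis(2) \<open>finite BM\<close> subset_refl combination_0])
    then show ?thesis using b_bij True unfolding u_def bij_betw_def by (simp add: inv_into_f_f)
  next
    case False
    then show ?thesis using a0 a(1) unfolding Bn_carrier_def by (cases "i = 0") auto
  qed
  then show ?thesis by auto
qed

lemma Bn_embed_inj: "inj_on (Bn_embed n b) (Bn_carrier n)"
proof (rule inj_onI)
  fix a a' assume a: "a \<in> Bn_carrier n" "a' \<in> Bn_carrier n" "Bn_embed n b a = Bn_embed n b a'"
  let ?d = "Bn_add a (Bn_scale (-1) a')"
  have "?d \<in> Bn_carrier n" using a Bn_add_carrier Bn_scale_carrier by blast
  moreover have "Bn_embed n b ?d = 0" using a(3) Bn_embed_add Bn_embed_scale by simp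
  ultimately have "?d = (\<lambda>_. 0)" by (rule Bn_embed_eq_0)
  then have "\<And>i. a i - a' i = 0" unfolding Bn_add_def Bn_scale_def
    by (metis add_uminus_conv_diff mult_minus1)
  then show "a = a'" by auto
qed

text \<open>The image is a subspace containing 1 and the basis of M, hence everything.\<close>

lemma Bn_embed_surj: "Bn_embed n b ` Bn_carrier n = UNIV"
proof -
  let ?C = "Bn_carrier n"
  have "subspace (Bn_embed n b ` ?C)"
  proof (rule subspaceI)
    have "Bn_embed n b (Bn_scale 0 Bn_one) = 0" using Bn_embed_scale by simp
    then show "0 \<in> Bn_embed n b ` ?C" using Bn_scale_carrier Bn_one_carrier by (metis image_eqI)
    show "y + z \<in> Bn_embed n b ` ?C" if "y \<in> Bn_embed n b ` ?C" "z \<in> Bn_embed n b ` ?C" for y z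
    proof -
      from that obtain a a' where a: "a \<in> ?C" "a' \<in> ?C"
        and "y = Bn_embed n b a" "z = Bn_embed n b a'" by blast
      then have "y + z = Bn_embed n b (Bn_add a a')" by (simp add: Bn_embed_add)
      then show ?thesis using Bn_add_carrier[OF a] by blast
    qed
    show "sc c y \<in> Bn_embed n b ` ?C" if "y \<in> Bn_embed n b ` ?C" for c y
    proof -
      from that obtain a where a: "a \<in> ?C" and "y = Bn_embed n b a" by blast
      then have "sc c y = Bn_embed n b (Bn_scale c a)" by (simp add: Bn_embed_scale)
      then show ?thesis using Bn_scale_carrier[OF a] by blast
    qed
  qed
  moreover have "BM \<subseteq> Bn_embed n b ` ?C"
  proof
    fix v assume "v \<in> BM"
    then obtain i where i: "i \<in> {1..n+1}" "v = b i" using b_bij unfolding bij_betw_def by blast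
    define e where "e = (\<lambda>j. if j = i then (1::complex) else 0)"
    have "M_part n b e = (\<Sum>j\<in>{1..n+1}. if j = i then b j else 0)"
      unfolding M_part_def e_def by (rule sum.cong) auto
    also have "\<dots> = v" using i by simp
    finally have "Bn_embed n b e = v" unfolding Bn_embed_def e_def using i by simp
    moreover have "e \<in> ?C" using i unfolding Bn_carrier_def e_def by auto
    ultimately show "v \<in> Bn_embed n b ` ?C" by blast
  qed
  moreover have "1 \<in> Bn_embed n b ` ?C" using Bn_embed_one Bn_one_carrier by (metis image_eqI)
  ultimately have "span (insert 1 BM) \<subseteq> Bn_embed n b ` ?C" by (metis span_minimal insert_subset)
  then show ?thesis using span_insert_one[OF BM_basis(3)] by blast
qed

end

lemma iso_Bn_if_squares_vanish:
  assumes dim: "dim (UNIV :: 'a set) = n + 2" and squares: "\<And>x. x \<in> M \<Longrightarrow> x * x = 0"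
  shows "iso_Bn sc n"
proof -
  obtain BM where BM: "BM \<subseteq> M" "independent BM" "M \<subseteq> span BM"
    using basis_exists[of M] by metis
  have "finite BM" using BM(2) by (rule finiteI_independent)
  moreover have "card BM = n + 1"
    using basis_card_eq_dim[OF BM(1,3,2)] dim dim_UNIV_eq_dim_M by simp
  ultimately obtain b where b: "bij_betw b {1..n+1} BM"
    using ex_bij_betw_nat_finite_1 by metis
  let ?g = "Bn_embed n b"
  have "bij_betw ?g (Bn_carrier n) UNIV"
    unfolding bij_betw_def using Bn_embed_inj[OF b BM] Bn_embed_surj[OF b BM] by blast
  moreover have "\<And>a a'. ?g (Bn_mult n a a') = ?g a * ?g a'"
    using Bn_embed_mult[OF b BM products_vanish] squares by blast
  ultimately show ?thesis
    by (intro iso_Bn_if_bij_hom[of ?g] Bn_embed_add Bn_embed_scale Bn_embed_one) (use b BM in auto)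
qed

end

lemma local_algebra_locale:
  fixes sc :: "complex \<Rightarrow> 'a::comm_ring_1 \<Rightarrow> 'a"
  assumes "local_algebra sc"
  obtains B M where "local_cx_algebra sc B M"
proof -
  have vs: "vector_space sc" and scale_mult: "\<And>c x y. sc c (x * y) = sc c x * y"
    using assms unfolding local_algebra_def cx_algebra_def by auto
  interpret V: vector_space sc by (rule vs)
  obtain B where B: "finite B" "V.span B = UNIV" using assms unfolding local_algebra_def by blast
  obtain B' where B': "B' \<subseteq> B" "V.independent B'" "B \<subseteq> V.span B'"
    using V.maximal_independent_subset[of B] by metis
  have span_B': "V.span B' = UNIV" using V.span_minimal[OF B'(3) V.subspace_span] B(2) by auto
  have "\<exists>!M :: 'a set. maximal_ideal M"
    using assms unfolding local_algebra_def by (elim conjE)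
  then obtain M :: "'a set" where M: "maximal_ideal M" "\<And>J. maximal_ideal J \<Longrightarrow> J = M"
    by blast
  have "residue_field_C sc M" using assms M(1) unfolding local_algebra_def by blast
  then have "local_cx_algebra sc B' M"
    by unfold_locales (simp_all add: finite_subset[OF B'(1) B(1)] B'(2) span_B' scale_mult M)
  then show ?thesis by (rule that)
qed

theorem lemma3:
  fixes sc :: "complex \<Rightarrow> 'a::comm_ring_1 \<Rightarrow> 'a" and n :: nat
  assumes "local_algebra sc"
    and "vector_space.dim sc (UNIV :: 'a set) = n + 2"
    and "\<not> iso_Bn sc n"
  shows "n_factor sc n"
proof -
  obtain B M where "local_cx_algebra sc B M" using local_algebra_locale[OF assms(1)] .
  then interpret R: local_cx_algebra sc B M .
  show ?thesis
  proof (cases "\<exists>x\<in>M. x * x \<noteq> 0")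
    case True
    then show ?thesis using R.n_factor_if_square_nonzero[OF assms(2)] by blast
  next
    case False
    then show ?thesis using R.iso_Bn_if_squares_vanish[OF assms(2)] assms(3) by blast
  qed
qed

end
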